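(* Let $n\in\mathbb{N}$. Then $K_{n,n}$ contains the derived subgroup $[F,F]$ of $F$.
   Context: Thompson's group $F$ is the group of piecewise linear homeomorphisms of $[0,1]$ with finitely many dyadic breakpoints and slopes integer powers of $2$. An element $h\in F$ has the pair of branches $u\rightarrow v$ (for finite binary words $u,v$) if $h(.u\alpha)=.v\alpha$ for every infinite binary word $\alpha$. For $H\le F$ write $u\sim_H v$ if some $h\in H$ has the pair of branches $u\rightarrow v$. The closure $\mathrm{Cl}(H)$ is the subgroup of all $f\in F$ for which there is a finite subdivision of $[0,1]$ into intervals on each of which $f$ coincides with some element of $H$; $H$ is closed if $H=\mathrm{Cl}(H)$ (intersections of closed subgroups are closed). $K_{n,n}$ is the minimal closed subgroup $K$ of $F$ such that: (a) $0^k1\sim_K 0^{k+n}1$ for all $k\in\mathbb{N}$; (b) $1^k0\sim_K 1^{k+n}0$ for all $k\in\mathbb{N}$; (c) $0^k1\sim_K 1^{n+1-k}0$ for $1\le k\le n$; (d) $0^{2k}10\sim_K 1^{1+3(n-k)}0$ for $1\le k\le n$; (e) $0^{2k}11\sim_K 1^{2+3(n-k)}0$ for $1\le k\le n$; (f) $0^{2k-1}1\sim_K 1^{3(n-k+1)}0$ for $1\le k\le n$. *)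

theory Defs
  imports "HOL-Analysis.Analysis"
begin

definition dyadic :: "real \<Rightarrow> bool" where
  "dyadic x \<longleftrightarrow> (\<exists>(a::int) (k::nat). x = of_int a / 2 ^ k)"

text \<open>Thompson's group F: piecewise linear homeomorphisms of [0,1] with finitely many
  dyadic breakpoints and slopes integer powers of 2.  Elements are represented as
  functions on the reals that are the identity outside [0,1], so that the group
  operation is function composition and the inverse is inv.\<close>
definition thompsonF :: "(real \<Rightarrow> real) set" where
  "thompsonF = {f. (\<forall>x. x \<notin> {0..1} \<longrightarrow> f x = x)
      \<and> (\<exists>g. homeomorphism {0..1} {0..1} f g)
      \<and> (\<exists>xs::real list. length xs \<ge> 2 \<and> hd xs = 0 \<and> last xs = 1
           \<and> sorted_wrt (<) xs \<and> (\<forall>x\<in>set xs. dyadic x)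
           \<and> (\<forall>i. Suc i < length xs \<longrightarrow>
                 (\<exists>(m::int) (c::real). \<forall>x\<in>{xs ! i .. xs ! Suc i}.
                    f x = 2 powr (of_int m) * x + c)))}"

definition subgroupF :: "(real \<Rightarrow> real) set \<Rightarrow> bool" where
  "subgroupF H \<longleftrightarrow> H \<subseteq> thompsonF \<and> id \<in> H
      \<and> (\<forall>f\<in>H. \<forall>g\<in>H. f \<circ> g \<in> H) \<and> (\<forall>f\<in>H. inv f \<in> H)"

definition wval :: "(nat \<Rightarrow> bool) \<Rightarrow> real" where
  "wval s = (\<Sum>i. if s i then 1 / 2 ^ Suc i else 0)"

definition wcat :: "bool list \<Rightarrow> (nat \<Rightarrow> bool) \<Rightarrow> (nat \<Rightarrow> bool)" where
  "wcat u \<alpha> = (\<lambda>i. if i < length u then u ! i else \<alpha> (i - length u))"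

definition has_branch :: "(real \<Rightarrow> real) \<Rightarrow> bool list \<Rightarrow> bool list \<Rightarrow> bool" where
  "has_branch h u v \<longleftrightarrow> (\<forall>\<alpha>. h (wval (wcat u \<alpha>)) = wval (wcat v \<alpha>))"

definition simH :: "(real \<Rightarrow> real) set \<Rightarrow> bool list \<Rightarrow> bool list \<Rightarrow> bool" where
  "simH H u v \<longleftrightarrow> (\<exists>h\<in>H. has_branch h u v)"

definition ClF :: "(real \<Rightarrow> real) set \<Rightarrow> (real \<Rightarrow> real) set" where
  "ClF H = {f\<in>thompsonF. \<exists>xs::real list. length xs \<ge> 2 \<and> hd xs = 0 \<and> last xs = 1
      \<and> sorted_wrt (<) xs
      \<and> (\<forall>i. Suc i < length xs \<longrightarrow>
            (\<exists>h\<in>H. \<forall>x\<in>{xs ! i .. xs ! Suc i}. f x = h x))}"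

definition closedF :: "(real \<Rightarrow> real) set \<Rightarrow> bool" where
  "closedF H \<longleftrightarrow> H = ClF H"

definition zs_one :: "nat \<Rightarrow> bool list" where
  "zs_one k = replicate k False @ [True]"
definition os_zero :: "nat \<Rightarrow> bool list" where
  "os_zero k = replicate k True @ [False]"

text \<open>Conditions (a)-(f) defining K_{n,n}; \<open>\<nat>\<close> = positive integers here.\<close>
definition Kconds :: "nat \<Rightarrow> (real \<Rightarrow> real) set \<Rightarrow> bool" where
  "Kconds n K \<longleftrightarrow>
     (\<forall>k\<ge>1. simH K (zs_one k) (zs_one (k + n)))
   \<and> (\<forall>k\<ge>1. simH K (os_zero k) (os_zero (k + n)))
   \<and> (\<forall>k. 1 \<le> k \<and> k \<le> n \<longrightarrow> simH K (zs_one k) (os_zero (n + 1 - k)))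
   \<and> (\<forall>k. 1 \<le> k \<and> k \<le> n \<longrightarrow>
        simH K (replicate (2*k) False @ [True, False]) (os_zero (1 + 3*(n - k))))
   \<and> (\<forall>k. 1 \<le> k \<and> k \<le> n \<longrightarrow>
        simH K (replicate (2*k) False @ [True, True]) (os_zero (2 + 3*(n - k))))
   \<and> (\<forall>k. 1 \<le> k \<and> k \<le> n \<longrightarrow> simH K (zs_one (2*k - 1)) (os_zero (3*(n - k + 1))))"

definition Knn :: "nat \<Rightarrow> (real \<Rightarrow> real) set" where
  "Knn n = \<Inter> {K. subgroupF K \<and> closedF K \<and> Kconds n K}"

definition derivedF :: "(real \<Rightarrow> real) set" where
  "derivedF = \<Inter> {H. subgroupF H \<and>
      (\<forall>f\<in>thompsonF. \<forall>g\<in>thompsonF. f \<circ> g \<circ> inv f \<circ> inv g \<in> H)}"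

end

(* Every commutator of F lies in F and is the identity near 0 and 1. On a fine enough dyadic grid
   such an element maps each remaining cell affinely onto a dyadic cell, i.e. it has a pair of
   branches u -> v between interior words (words containing both digits). As K is closed, it
   therefore suffices that all interior words are K-equivalent.
   By (a)-(c) the classes of 0^a 1 and 1^j 0 depend only on a, resp. 1 - j, modulo n, and (d)-(f)
   become the relations 2k-1 ~ 3k-2 and 2k ~ 2k' ==> 3k ~ 3k', 3k-1 ~ 3k'-1 on these residues.
   Induction on n (halving n if it is even, dividing it by 3 if 3 | n, and working modulo n with
   the inverse of 2 otherwise) shows that there is only one class. Finally 0 1 w ~ 0 1 for every
   word w, and every interior word has the form 0^a 1 w or 1^a 0 w. *)

theory Submission
  imports Defs
begin

section \<open>Periodic relations on the integers\<close>

text \<open>\<open>R\<close> will relate the integers indexing the branch classes \<open>0^a 1\<close> of a subgroup;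
  \<open>R_odd\<close> is condition (f) and \<open>R_even\<close> comes from (d) and (e).\<close>

locale branch_relation =
  fixes R :: "int \<Rightarrow> int \<Rightarrow> bool"
  assumes R_refl: "R x x"
    and R_sym: "R x y \<Longrightarrow> R y x"
    and R_trans [trans]: "R x y \<Longrightarrow> R y z \<Longrightarrow> R x z"
    and R_odd: "R (2*k - 1) (3*k - 2)"
    and R_even: "R (2*k) (2*k') \<Longrightarrow> R (3*k) (3*k') \<and> R (3*k - 1) (3*k' - 1)"
begin

definition periodic :: "int \<Rightarrow> bool" where
  "periodic d \<longleftrightarrow> (\<forall>x. R x (x + d))"

lemma periodicD: "periodic d \<Longrightarrow> R x (x + d)"
  unfolding periodic_def by blast

lemma periodic_add:
  assumes "periodic a" "periodic b"
  shows "periodic (a + b)"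
  unfolding periodic_def
proof
  fix x
  have "R x (x + a)" using assms(1) by (rule periodicD)
  also have "R (x + a) (x + a + b)" using assms(2) by (rule periodicD)
  finally show "R x (x + (a + b))" by (simp add: add.assoc)
qed

lemma periodic_uminus:
  assumes "periodic a"
  shows "periodic (- a)"
  unfolding periodic_def
proof
  fix x
  have "R (x - a) (x - a + a)" using assms by (rule periodicD)
  then show "R x (x + - a)" by (simp add: R_sym)
qed

lemma periodic_of_nat_mult:
  assumes "periodic a"
  shows "periodic (int j * a)"
proof (induction j)
  case 0
  then show ?case by (simp add: periodic_def R_refl)
next
  case (Suc j)
  then show ?case using periodic_add[OF Suc assms] by (simp add: algebra_simps)
qed

lemma periodic_mult:
  assumes "periodic a"
  shows "periodic (t * a)"
proof (cases "t \<ge> 0")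
  case True
  then show ?thesis using periodic_of_nat_mult[OF assms, of "nat t"] by simp
next
  case False
  then show ?thesis using periodic_uminus[OF periodic_of_nat_mult[OF assms, of "nat (- t)"]] by simp
qed

lemma periodic_lincomb: "periodic a \<Longrightarrow> periodic b \<Longrightarrow> periodic (s * a + t * b)"
  by (intro periodic_add periodic_mult)

lemma periodic_shift:
  assumes "periodic d" "y = x + t * d"
  shows "R x y"
  using periodicD[OF periodic_mult[OF assms(1)]] assms(2) by simp

lemma periodic_dvdD:
  assumes "periodic d" "d dvd y - x"
  shows "R x y"
proof -
  obtain t where "y - x = d * t" using assms(2) by (rule dvdE)
  then show ?thesis by (intro periodic_shift[OF assms(1), of _ _ t]) (simp add: algebra_simps)
qed

lemma odd_shift:
  assumes "periodic (3*m)"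
  shows "R (2*k - 1) (2*k - 1 + 2*m)"
proof -
  have "R (2*k - 1) (3*k - 2)" by (rule R_odd)
  also have "R (3*k - 2) (3*(k + m) - 2)" by (rule periodic_shift[OF assms, of _ _ 1]) simp
  also have "R (3*(k + m) - 2) (2*(k + m) - 1)" by (rule R_sym[OF R_odd])
  finally show ?thesis by (simp add: algebra_simps)
qed

lemma shift_unless_mod_3_eq_1:
  assumes "periodic (2*q)" "x mod 3 \<noteq> 1"
  shows "R x (x + q)"
proof -
  have "R (2*k) (2*(k + q))" for k by (rule periodic_shift[OF assms(1), of _ _ 1]) simp
  then have *: "R (3*k) (3*(k + q)) \<and> R (3*k - 1) (3*(k + q) - 1)" for k by (rule R_even)
  have "R y (y + q)" if "y = 3*k - c" "c \<in> {0, 1}" for y k c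
  proof -
    have "R y (3*(k + q) - c)" using * that by auto
    also have "R (3*(k + q) - c) (y + q)" by (rule periodic_shift[OF assms(1), of _ _ "-1"]) (simp add: that)
    finally show ?thesis .
  qed
  moreover have "x = 3 * (x div 3) - 0 \<or> x = 3 * (x div 3 + 1) - 1" using assms(2) by presburger
  ultimately show ?thesis by blast
qed

lemma odd_shift_sixth:
  assumes "periodic (6*r)"
  shows "R (2*k - 1) (2*k - 1 + 2*r)"
proof -
  have p: "periodic (3*(2*r))" using assms by simp
  have "R (2*k - 1) (2*(k + 3*r) - 1)" by (rule periodic_shift[OF assms, of _ _ 1]) simp
  also have "R (2*(k + 3*r) - 1) (2*(k + r) - 1)"
    using R_sym[OF odd_shift[OF p, of "k + r"]] by (simp add: algebra_simps)
  finally show ?thesis by (simp add: algebra_simps)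
qed

lemma periodic_half:
  assumes "periodic (2*q)"
  shows "periodic q"
  unfolding periodic_def
proof
  fix x
  show "R x (x + q)"
  proof (cases "x mod 3 = 1")
    case False
    then show ?thesis using shift_unless_mod_3_eq_1[OF assms] by blast
  next
    case x_mod: True
    show ?thesis
    proof (cases "3 dvd q")
      case True
      then obtain r where q: "q = 3*r" by blast
      then have "periodic (6*r)" using assms by simp
      define k where "k = (x + 2) div 3"
      have "x = 3*k - 2" using x_mod unfolding k_def by presburger
      then have "R x (2*k - 1)" by (simp add: R_sym R_odd)
      also have "R (2*k - 1) (2*(k + r) - 1)"
        using odd_shift_sixth[OF \<open>periodic (6*r)\<close>, of k] by (simp add: algebra_simps)
      also have "R (2*(k + r) - 1) (3*(k + r) - 2)" by (rule R_odd)
      finally have "R x (3*(k + r) - 2)" .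
      moreover have "3*(k + r) - 2 = x + q" using \<open>x = 3*k - 2\<close> q by simp
      ultimately show ?thesis by simp
    next
      case False
      then have "(x + 2*q) mod 3 \<noteq> 1" using x_mod by presburger
      have "R x (x + 2*q)" using assms by (rule periodicD)
      also have "R (x + 2*q) (x + 2*q + q)" using shift_unless_mod_3_eq_1[OF assms] \<open>_ mod 3 \<noteq> 1\<close> .
      also have "R (x + 2*q + q) (x + q)" by (rule periodic_shift[OF assms, of _ _ "-1"]) simp
      finally show ?thesis .
    qed
  qed
qed

lemma periodic_third:
  assumes "periodic (3*q)" "odd q"
  shows "periodic q"
proof -
  have "R x (x + 2*q)" for x
  proof (cases "odd x")
    case True
    then have "x = 2*((x + 1) div 2) - 1" by presburger
    then show ?thesis using odd_shift[OF assms(1), of "(x + 1) div 2"] by simp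
  next
    case False
    then have x3q: "x + 3*q = 2*((x + 3*q + 1) div 2) - 1" using assms(2) by presburger
    have "R x (x + 3*q)" using assms(1) by (rule periodicD)
    also have "R (x + 3*q) (x + 3*q + 2*q)"
      using odd_shift[OF assms(1), of "(x + 3*q + 1) div 2"] x3q by simp
    also have "R (x + 3*q + 2*q) (x + 2*q)" by (rule periodic_shift[OF assms(1), of _ _ "-1"]) simp
    finally show ?thesis .
  qed
  then have "periodic (2*q)" unfolding periodic_def by blast
  from periodic_lincomb[OF assms(1) this, of 1 "-1"] show ?thesis by simp
qed

text \<open>For odd \<open>2*h - 1\<close>, multiplication by \<open>h\<close> is halving modulo the period, so \<open>R_odd\<close> and
  \<open>R_even\<close> say that \<open>a\<close> is related to \<open>(3*a - 1)/2\<close> and that \<open>a \<mapsto> 3*a/2\<close> preserves \<open>R\<close>.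
  Comparing both images of \<open>3*a/2\<close> shows that \<open>(9*a - 3)/4\<close> is related to its successor by
  \<open>1/4\<close>, and these points exhaust all residues when \<open>3\<close> is invertible.\<close>

lemma halving_odd:
  assumes "periodic (2*h - 1)"
  shows "R a ((3*a - 1) * h)"
proof -
  have "R a (2*((a + 1) * h) - 1)"
    by (rule periodic_shift[OF assms, of _ _ "a + 1"]) (simp add: algebra_simps)
  also have "R (2*((a + 1) * h) - 1) (3*((a + 1) * h) - 2)" by (rule R_odd)
  also have "R (3*((a + 1) * h) - 2) ((3*a - 1) * h)"
    by (rule periodic_shift[OF assms, of _ _ "-2"]) (simp add: algebra_simps)
  finally show ?thesis .
qed

lemma halving_even:
  assumes "periodic (2*h - 1)" "R a b"
  shows "R (3*(a*h)) (3*(b*h))"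
proof -
  have "R (2*(a*h)) a" by (rule periodic_shift[OF assms(1), of _ _ "- a"]) (simp add: algebra_simps)
  also have "R a b" by (rule assms(2))
  also have "R b (2*(b*h))" by (rule periodic_shift[OF assms(1), of _ _ b]) (simp add: algebra_simps)
  finally show ?thesis using R_even by blast
qed

lemma quarter_shift:
  assumes "periodic (2*h - 1)"
  shows "R ((9*a - 3)*h*h) ((9*a - 3)*h*h + h*h)"
proof -
  have "R ((9*a - 3)*h*h) (3*(a*h))"
    using R_sym[OF halving_even[OF assms halving_odd[OF assms]]] by (simp add: algebra_simps)
  also have "R (3*(a*h)) ((3*(3*(a*h)) - 1) * h)" by (rule halving_odd[OF assms])
  also have "R ((3*(3*(a*h)) - 1) * h) ((9*a - 3)*h*h + h*h)"
    by (rule periodic_shift[OF assms, of _ _ "-h"]) (simp add: algebra_simps)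
  finally show ?thesis .
qed

lemma periodic_one:
  assumes "periodic (2*h - 1)" "\<not> 3 dvd (2*h - 1)"
  shows "periodic 1"
proof -
  have "coprime 3 (2*h - 1)" using assms(2) by (simp add: prime_imp_coprime)
  then have "coprime (9::int) (2*h - 1)" using coprime_mult_left_iff[of 3 3 "2*h - 1"] by simp
  then obtain u v where uv: "u * 9 + v * (2*h - 1) = 1"
    using bezout_int[of 9 "2*h - 1"] by (auto simp: coprime_iff_gcd_eq_1)
  have "R y (y + h*h)" for y
  proof -
    define a where "a = u * (4*y + 3)"
    define t where "t = (2*h + 1) * y - h * h * v * (4*y + 3)"
    have "9*u = 1 - v * (2*h - 1)" using uv by simp
    then have "9*a = (1 - v * (2*h - 1)) * (4*y + 3)" unfolding a_def by (metis mult.assoc)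
    then have "(9*a - 3)*h*h = ((1 - v * (2*h - 1)) * (4*y + 3) - 3)*h*h" by simp
    also have "\<dots> = y + t * (2*h - 1)" unfolding t_def by algebra
    finally have a: "(9*a - 3)*h*h = y + t * (2*h - 1)" .
    have "R y ((9*a - 3)*h*h)" using periodic_shift[OF assms(1) a] .
    also have "R ((9*a - 3)*h*h) ((9*a - 3)*h*h + h*h)" by (rule quarter_shift[OF assms(1)])
    also have "R ((9*a - 3)*h*h + h*h) (y + h*h)"
      by (rule periodic_shift[OF assms(1), of _ _ "- t"]) (simp add: a)
    finally show ?thesis .
  qed
  then have "periodic (h*h)" unfolding periodic_def by blast
  from periodic_lincomb[OF this assms(1), of 4 "- (2*h + 1)"] show ?thesis
    by (simp add: algebra_simps)
qed

theorem R_total: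
  assumes "n \<ge> 1" "periodic (int n)"
  shows "R x y"
  using assms
proof (induction n rule: less_induct)
  case (less n)
  consider "n = 1" | "even n" | "odd n" "3 dvd n" | "odd n" "\<not> 3 dvd n" by blast
  then show ?case
  proof cases
    case 1
    then show ?thesis using less.prems periodic_dvdD by simp
  next
    case 2
    then obtain q where q: "n = 2*q" by blast
    then have "q < n" "1 \<le> q" using less.prems by auto
    then show ?thesis using less.IH[of q] less.prems q periodic_half[of "int q"] by simp
  next
    case 3
    then obtain q where q: "n = 3*q" by blast
    then have "q < n" "1 \<le> q" using less.prems by auto
    then show ?thesis using less.IH[of q] less.prems q periodic_third[of "int q"] \<open>odd n\<close> by simp
  next
    case 4
    then have "int n = 2 * ((int n + 1) div 2) - 1" by presburger
    then have "periodic 1" using periodic_one less.prems 4 by (metis int_dvd_int_iff of_nat_numeral)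
    then show ?thesis by (rule periodic_dvdD) simp
  qed
qed

end

section \<open>Binary words\<close>

definition wval_list :: "bool list \<Rightarrow> real" where
  "wval_list u = (\<Sum>i<length u. if u ! i then 1 / 2 ^ Suc i else 0)"

lemma summable_wval: "summable (\<lambda>i. if s i then 1 / 2 ^ Suc i else 0 :: real)"
proof (rule summable_comparison_test'[where N=0])
  show "summable (\<lambda>i. (1/2::real) ^ Suc i)" using power_half_series sums_summable by blast
  show "norm (if s i then 1 / 2 ^ Suc i else 0 :: real) \<le> (1/2) ^ Suc i" for i
    by (simp add: power_divide)
qed

lemma wval_wcat: "wval (wcat u a) = wval_list u + wval a / 2 ^ length u"
proof -
  let ?t = "\<lambda>s i. if s i then 1 / 2 ^ Suc i else 0 :: real"
  have "wval (wcat u a) = (\<Sum>i. ?t (wcat u a) (i + length u)) + (\<Sum>i<length u. ?t (wcat u a) i)"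
    unfolding wval_def by (rule suminf_split_initial_segment[OF summable_wval])
  moreover have "(\<Sum>i<length u. ?t (wcat u a) i) = wval_list u"
    unfolding wval_list_def wcat_def by (rule sum.cong) auto
  moreover have "(\<lambda>i. ?t (wcat u a) (i + length u)) = (\<lambda>i. ?t a i / 2 ^ length u)"
    by (rule ext) (simp add: wcat_def power_add)
  moreover have "(\<Sum>i. ?t a i / 2 ^ length u) = wval a / 2 ^ length u"
    unfolding wval_def by (rule suminf_divide[OF summable_wval])
  ultimately show ?thesis by simp
qed

lemma wcat_append: "wcat (u @ w) a = wcat u (wcat w a)"
  by (rule ext) (auto simp: wcat_def nth_append)

lemma has_branch_append: "has_branch h u v \<Longrightarrow> has_branch h (u @ w) (v @ w)"
  unfolding has_branch_def by (simp add: wcat_append)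

lemma wval_list_snoc: "wval_list (u @ [b]) = wval_list u + (if b then 1 / 2 ^ Suc (length u) else 0)"
  unfolding wval_list_def by (simp add: nth_append)

lemma wval_list_replicate_False: "wval_list (replicate m False) = 0"
  unfolding wval_list_def by simp

lemma wval_list_replicate_True: "wval_list (replicate m True) = 1 - 1 / 2 ^ m"
proof (induction m)
  case 0
  then show ?case by (simp add: wval_list_def)
next
  case (Suc m)
  have "replicate (Suc m) True = replicate m True @ [True]" by (simp add: replicate_append_same)
  then show ?case using Suc by (simp add: wval_list_snoc field_simps)
qed

fun bin_digits :: "nat \<Rightarrow> nat \<Rightarrow> bool list" where
  "bin_digits 0 j = []"
| "bin_digits (Suc M) j = bin_digits M (j div 2) @ [odd j]"

lemma length_bin_digits [simp]: "length (bin_digits M j) = M"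
  by (induction M arbitrary: j) auto

lemma wval_list_bin_digits: "j < 2 ^ M \<Longrightarrow> wval_list (bin_digits M j) = real j / 2 ^ M"
proof (induction M arbitrary: j)
  case 0
  then show ?case by (simp add: wval_list_def)
next
  case (Suc M)
  then have IH: "wval_list (bin_digits M (j div 2)) = real (j div 2) / 2 ^ M" by simp
  have "j = 2 * (j div 2) + (if odd j then 1 else 0)" by presburger
  then have "real j = real (2 * (j div 2) + (if odd j then 1 else 0))" by simp
  then have "real j = 2 * real (j div 2) + (if odd j then 1 else 0)" by (simp split: if_splits)
  with IH show ?case by (auto simp: wval_list_snoc field_simps)
qed

lemma bool_list_eq_replicate:
  assumes "(\<not> b) \<notin> set u"
  shows "u = replicate (length u) b"
proof -
  have "y = b" if "y \<in> set u" for y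
  proof (rule ccontr)
    assume "y \<noteq> b"
    then have "y = (\<not> b)" by blast
    then show False using that assms by simp
  qed
  then show ?thesis by (simp add: replicate_length_same)
qed

definition interior_word :: "bool list \<Rightarrow> bool" where
  "interior_word u \<longleftrightarrow> True \<in> set u \<and> False \<in> set u"

lemma interior_word_bin_digits:
  assumes "0 < j" "j + 1 < 2 ^ M"
  shows "interior_word (bin_digits M j)"
proof -
  have j: "j < 2 ^ M" using assms by simp
  have "bin_digits M j \<noteq> replicate M b" for b
  proof
    assume "bin_digits M j = replicate M b"
    then have "real j / 2 ^ M = wval_list (replicate M b)" using wval_list_bin_digits[OF j] by simp
    then have "real j / 2 ^ M = (if b then 1 - 1 / 2 ^ M else 0)"
      by (cases b) (simp_all only: wval_list_replicate_True wval_list_replicate_False if_True if_False)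
    then have "real (j + 1) = real (2 ^ M) \<or> j = 0" by (auto simp: field_simps split: if_splits)
    then have "j + 1 = 2 ^ M \<or> j = 0" by (simp only: of_nat_eq_iff)
    then show False using assms by simp
  qed
  then have "x \<in> set (bin_digits M j)" for x
    using bool_list_eq_replicate[of "\<not> x" "bin_digits M j"] by auto
  then show ?thesis unfolding interior_word_def by blast
qed

lemma interior_word_split:
  assumes "interior_word u"
  obtains a b w where "a \<ge> 1" "u = replicate a b @ (\<not> b) # w"
proof -
  define b where "b = hd u"
  have "(\<not> b) \<in> set u" using assms unfolding interior_word_def by (cases b) simp_all
  then obtain ys w where u: "u = ys @ (\<not> b) # w" "(\<not> b) \<notin> set ys" using split_list_first by metis
  then have "ys \<noteq> []" using b_def by auto
  have "ys = replicate (length ys) b" using bool_list_eq_replicate u(2) by blast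
  with \<open>ys \<noteq> []\<close> show ?thesis using that[of "length ys" b w] u(1) by (simp add: Suc_le_eq)
qed

lemma wval_surj:
  assumes "0 \<le> t" "t \<le> 1"
  shows "\<exists>a. wval a = t"
proof (cases "t = 1")
  case True
  have "(\<lambda>i. if True then 1 / 2 ^ Suc i else 0) = (\<lambda>i. (1/2::real) ^ Suc i)"
    by (simp add: power_divide)
  then have "wval (\<lambda>_. True) = 1" unfolding wval_def using power_half_series by (simp add: sums_iff)
  then show ?thesis using True by blast
next
  case False
  define d :: "nat \<Rightarrow> int" where "d i = \<lfloor>t * 2 ^ i\<rfloor>" for i
  define a where "a i = odd (d (Suc i))" for i
  have d_Suc: "d (Suc i) = 2 * d i + (if a i then 1 else 0)" for i
  proof -
    have "2 * d i \<le> d (Suc i)" "d (Suc i) \<le> 2 * d i + 1"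
      unfolding d_def by (simp_all add: le_floor_iff floor_le_iff) linarith+
    then show ?thesis unfolding a_def by presburger
  qed
  have partial_sums: "(\<Sum>i<N. if a i then 1 / 2 ^ Suc i else 0) = real_of_int (d N) / 2 ^ N" for N
  proof (induction N)
    case 0
    then show ?case using assms False by (simp add: d_def floor_eq_iff)
  next
    case (Suc N)
    then show ?case by (simp add: d_Suc field_simps)
  qed
  have lower: "t - (1/2) ^ N \<le> real_of_int (d N) / 2 ^ N" for N
  proof -
    have "t * 2 ^ N - 1 \<le> real_of_int (d N)" unfolding d_def by linarith
    then have "(t * 2 ^ N - 1) / 2 ^ N \<le> real_of_int (d N) / 2 ^ N" by (simp add: divide_right_mono)
    then show ?thesis by (simp add: diff_divide_distrib power_divide)
  qed
  have upper: "real_of_int (d N) / 2 ^ N \<le> t" for N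
    unfolding d_def by (simp add: pos_divide_le_eq)
  have "(\<lambda>N. t - (1/2::real) ^ N) \<longlonglongrightarrow> t - 0"
    by (intro tendsto_diff tendsto_const LIMSEQ_realpow_zero) simp_all
  then have "(\<lambda>N. t - (1/2::real) ^ N) \<longlonglongrightarrow> t" by simp
  from tendsto_sandwich[OF _ _ this tendsto_const] lower upper
  have "(\<lambda>N. real_of_int (d N) / 2 ^ N) \<longlonglongrightarrow> t" by simp
  then have "(\<lambda>i. if a i then 1 / 2 ^ Suc i else 0) sums t" unfolding sums_def partial_sums .
  then have "wval a = t" unfolding wval_def by (rule sums_unique[symmetric])
  then show ?thesis by blast
qed

section \<open>Elements of F\<close>

definition homeo01 :: "(real \<Rightarrow> real) \<Rightarrow> bool" where
  "homeo01 f \<longleftrightarrow> (\<forall>x. x \<notin> {0..1} \<longrightarrow> f x = x) \<and> (\<exists>g. homeomorphism {0..1} {0..1} f g)"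

definition breakpoints :: "(real \<Rightarrow> real) \<Rightarrow> real list \<Rightarrow> bool" where
  "breakpoints f xs \<longleftrightarrow> length xs \<ge> 2 \<and> hd xs = 0 \<and> last xs = 1 \<and> sorted_wrt (<) xs
      \<and> (\<forall>x\<in>set xs. dyadic x)
      \<and> (\<forall>i. Suc i < length xs \<longrightarrow>
            (\<exists>(m::int) c. \<forall>x\<in>{xs ! i .. xs ! Suc i}. f x = 2 powr m * x + c))"

lemma thompsonF_iff: "f \<in> thompsonF \<longleftrightarrow> homeo01 f \<and> (\<exists>xs. breakpoints f xs)"
  unfolding thompsonF_def homeo01_def breakpoints_def by blast

lemma breakpoints_nth_0: "breakpoints f xs \<Longrightarrow> xs ! 0 = 0"
  unfolding breakpoints_def by (metis hd_conv_nth list.size(3) not_numeral_le_zero)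

lemma breakpoints_nth_in_01:
  assumes "breakpoints f xs" "i < length xs"
  shows "xs ! i \<in> {0..1}"
proof -
  have "sorted xs" "xs \<noteq> []" using assms unfolding breakpoints_def by (auto intro: strict_sorted_imp_sorted)
  then have "xs ! 0 \<le> xs ! i" "xs ! i \<le> xs ! (length xs - 1)"
    using assms(2) by (simp_all add: sorted_nth_mono)
  then show ?thesis using assms \<open>xs \<noteq> []\<close> unfolding breakpoints_def by (simp add: hd_conv_nth last_conv_nth)
qed

lemma breakpoints_piece:
  assumes "breakpoints f xs" "Suc i < length xs"
  obtains m :: int and c where "xs ! i < xs ! Suc i"
    "\<And>x. x \<in> {xs ! i .. xs ! Suc i} \<Longrightarrow> f x = 2 powr m * x + c"
  using assms sorted_wrt_nth_less[of "(<)" xs i "Suc i"] unfolding breakpoints_def by auto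

lemma homeo01_inj:
  assumes "homeo01 f"
  shows "inj f"
proof (rule injI)
  fix x y assume eq: "f x = f y"
  obtain g where g: "homeomorphism {0..1} {0..1} f g" and out: "\<And>z. z \<notin> {0..1} \<Longrightarrow> f z = z"
    using assms unfolding homeo01_def by blast
  have gf: "\<And>z. z \<in> {0..1} \<Longrightarrow> g (f z) = z" and img: "\<And>z. z \<in> {0..1} \<Longrightarrow> f z \<in> {0..1}"
    using g unfolding homeomorphism_def by auto
  show "x = y"
  proof (cases "x \<in> {0..1}"; cases "y \<in> {0..1}")
    assume "x \<in> {0..1}" "y \<in> {0..1}"
    then show ?thesis using gf eq by metis
  next
    assume "x \<in> {0..1}" "y \<notin> {0..1}"
    then show ?thesis using img[of x] out[of y] eq by simp
  next
    assume "x \<notin> {0..1}" "y \<in> {0..1}"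
    then show ?thesis using img[of y] out[of x] eq by simp
  next
    assume "x \<notin> {0..1}" "y \<notin> {0..1}"
    then show ?thesis using out eq by simp
  qed
qed

lemma homeo01_comp:
  assumes "homeo01 f" "homeo01 g"
  shows "homeo01 (f \<circ> g)"
proof -
  obtain f' g' where "homeomorphism {0..1} {0..1} f f'" "homeomorphism {0..1} {0..1} g g'"
    using assms unfolding homeo01_def by blast
  then have "homeomorphism {0..1} {0..1} (f \<circ> g) (g' \<circ> f')" by (rule homeomorphism_compose[rotated])
  then show ?thesis using assms unfolding homeo01_def by auto
qed

lemma homeo01_inv:
  assumes "homeo01 f"
  shows "homeo01 (inv f)"
proof -
  obtain g where g: "homeomorphism {0..1} {0..1} f g" and out: "\<And>x. x \<notin> {0..1} \<Longrightarrow> f x = x"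
    using assms unfolding homeo01_def by blast
  have "inv f y = g y" if "y \<in> {0..1}" for y
  proof (rule inv_f_eq[OF homeo01_inj[OF assms]])
    show "f (g y) = y" using g that unfolding homeomorphism_def by auto
  qed
  then have "homeomorphism {0..1} {0..1} (inv f) f"
    using homeomorphism_cong[OF homeomorphism_symD[OF g]] by auto
  moreover have "inv f x = x" if "x \<notin> {0..1}" for x
    using inv_f_eq[OF homeo01_inj[OF assms] out[OF that]] .
  ultimately show ?thesis unfolding homeo01_def by blast
qed

lemma homeo01_strict_mono:
  assumes "homeo01 f" "f 0 < f 1"
  shows "strict_mono_on {0..1} f"
proof (rule strict_mono_onI)
  obtain g where g: "homeomorphism {0..1} {0..1} f g" using assms unfolding homeo01_def by blast
  then have cont: "continuous_on {0..1} f" and inj01: "inj_on f {0..1}"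
    unfolding homeomorphism_def by (auto intro: inj_on_inverseI)
  have ends: "f 0 < f z" "f z < f 1" if "0 < z" "z < 1" for z
    using continuous_inj_imp_mono[OF that cont inj01] assms(2) by auto
  fix x y :: real assume x: "x \<in> {0..1}" and y: "y \<in> {0..1}" and "x < y"
  show "f x < f y"
  proof (cases "x = 0")
    case True
    then show ?thesis using assms(2) ends(1)[of y] \<open>x < y\<close> y by (cases "y = 1") auto
  next
    case False
    then have "0 < x" using x by simp
    show ?thesis
    proof (cases "y = 1")
      case True
      then show ?thesis using ends(2)[of x] \<open>0 < x\<close> \<open>x < y\<close> by simp
    next
      case False
      then have "0 < y" "y < 1" using y \<open>0 < x\<close> \<open>x < y\<close> by auto
      have "{0..y} \<subseteq> {0..1}" using y by auto
      then have "continuous_on {0..y} f" "inj_on f {0..y}"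
        using continuous_on_subset[OF cont] inj_on_subset[OF inj01] by blast+
      from continuous_inj_imp_mono[OF \<open>0 < x\<close> \<open>x < y\<close> this]
      show ?thesis using ends(1)[OF \<open>0 < y\<close> \<open>y < 1\<close>] by auto
    qed
  qed
qed

lemma breakpoints_increasing:
  assumes "homeo01 f" "breakpoints f xs"
  shows "f 0 < f 1"
proof -
  obtain g where g: "homeomorphism {0..1} {0..1} f g" using assms unfolding homeo01_def by blast
  then have cont: "continuous_on {0..1} f" and inj01: "inj_on f {0..1}"
    unfolding homeomorphism_def by (auto intro: inj_on_inverseI)
  have "Suc 0 < length xs" using assms(2) unfolding breakpoints_def by simp
  then obtain m :: int and c where
    piece: "xs ! 0 < xs ! 1" "\<And>x. x \<in> {xs ! 0 .. xs ! 1} \<Longrightarrow> f x = 2 powr m * x + c"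
    using breakpoints_piece[OF assms(2), of 0] by (metis One_nat_def)
  have x1: "0 < xs ! 1" "xs ! 1 \<le> 1"
    using piece(1) breakpoints_nth_0[OF assms(2)] breakpoints_nth_in_01[OF assms(2), of 1]
      \<open>Suc 0 < length xs\<close> by auto
  have "f 0 < f (xs ! 1)" using piece breakpoints_nth_0[OF assms(2)] by auto
  moreover have "f (xs ! 1) < f 1" if "xs ! 1 < 1"
    using continuous_inj_imp_mono[OF x1(1) that cont inj01] \<open>f 0 < f (xs ! 1)\<close> by auto
  ultimately show ?thesis using x1 by (cases "xs ! 1 < 1") auto
qed

lemma thompsonF_strict_mono: "f \<in> thompsonF \<Longrightarrow> strict_mono_on {0..1} f"
  unfolding thompsonF_iff using breakpoints_increasing homeo01_strict_mono by blast

lemma thompsonF_image: "f \<in> thompsonF \<Longrightarrow> f ` {0..1} = {0..1}"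
  unfolding thompsonF_iff homeo01_def homeomorphism_def by blast

lemma thompsonF_inj: "f \<in> thompsonF \<Longrightarrow> inj f"
  unfolding thompsonF_iff using homeo01_inj by blast

lemma thompsonF_0: "f \<in> thompsonF \<Longrightarrow> f 0 = 0"
  and thompsonF_1: "f \<in> thompsonF \<Longrightarrow> f 1 = 1"
proof -
  assume f: "f \<in> thompsonF"
  note mono = strict_mono_on_less_eq[OF thompsonF_strict_mono[OF f]]
  have "0 \<in> f ` {0..1}" "1 \<in> f ` {0..1}" using thompsonF_image[OF f] by auto
  then obtain p q where "p \<in> {0..1}" "0 = f p" "q \<in> {0..1}" "1 = f q" by (meson imageE)
  moreover have "f 0 \<in> {0..1}" "f 1 \<in> {0..1}" using thompsonF_image[OF f] by auto
  ultimately show "f 0 = 0" "f 1 = 1" using mono[of 0 p] mono[of q 1] by auto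
qed

section \<open>Dyadic breakpoints and inverses\<close>

definition dyadic_level :: "nat \<Rightarrow> real \<Rightarrow> bool" where
  "dyadic_level k x \<longleftrightarrow> (\<exists>a::int. x = of_int a / 2 ^ k)"

lemma dyadic_iff_level: "dyadic x \<longleftrightarrow> (\<exists>k. dyadic_level k x)"
  unfolding dyadic_def dyadic_level_def by blast

lemma dyadic_level_mono:
  assumes "dyadic_level k x" "k \<le> k'"
  shows "dyadic_level k' x"
proof -
  obtain a where "x = of_int a / 2 ^ k" using assms(1) unfolding dyadic_level_def by blast
  moreover have "(2::real) ^ k' = 2 ^ k * 2 ^ (k' - k)" using assms(2) by (simp flip: power_add)
  ultimately have "x = of_int (a * 2 ^ (k' - k)) / 2 ^ k'" by simp
  then show ?thesis unfolding dyadic_level_def by blast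
qed

lemma dyadic_add:
  assumes "dyadic x" "dyadic y"
  shows "dyadic (x + y)"
proof -
  obtain k1 k2 where "dyadic_level k1 x" "dyadic_level k2 y" using assms unfolding dyadic_iff_level by blast
  then have "dyadic_level (k1 + k2) x" "dyadic_level (k1 + k2) y" using dyadic_level_mono by fastforce+
  then obtain a b where "x = of_int a / 2 ^ (k1 + k2)" "y = of_int b / 2 ^ (k1 + k2)"
    unfolding dyadic_level_def by blast
  then have "x + y = of_int (a + b) / 2 ^ (k1 + k2)" by (simp add: add_divide_distrib)
  then show ?thesis unfolding dyadic_def by blast
qed

lemma dyadic_minus: "dyadic x \<Longrightarrow> dyadic (- x)"
  unfolding dyadic_def by (metis minus_divide_left of_int_minus)

lemma dyadic_diff: "dyadic x \<Longrightarrow> dyadic y \<Longrightarrow> dyadic (x - y)"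
  using dyadic_add[of x "- y"] dyadic_minus by simp

lemma dyadic_mult:
  assumes "dyadic x" "dyadic y"
  shows "dyadic (x * y)"
proof -
  obtain a b k1 k2 where "x = of_int a / 2 ^ k1" "y = of_int b / 2 ^ k2" using assms unfolding dyadic_def by blast
  then have "x * y = of_int (a * b) / 2 ^ (k1 + k2)" by (simp add: power_add)
  then show ?thesis unfolding dyadic_def by blast
qed

lemma dyadic_of_nat_div: "dyadic (real j / 2 ^ M)"
  unfolding dyadic_def by (rule exI[of _ "int j"], rule exI[of _ M]) simp

lemma dyadic_powr: "dyadic (2 powr of_int m)"
proof (cases "m \<ge> 0")
  case True
  then have "(2::real) powr of_int m = real (2 ^ nat m) / 2 ^ 0" by (simp flip: powr_realpow)
  then show ?thesis using dyadic_of_nat_div by metis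
next
  case False
  then have "(2::real) powr of_int m = real 1 / 2 ^ nat (- m)"
    by (simp add: powr_minus_divide flip: powr_realpow)
  then show ?thesis using dyadic_of_nat_div by metis
qed

lemma dyadic_affine_value:
  "dyadic b \<Longrightarrow> dyadic x \<Longrightarrow> dyadic (2 powr of_int m * x + b)"
  by (intro dyadic_add dyadic_mult dyadic_powr)

lemma breakpoints_dyadic_value:
  assumes "breakpoints f xs" "f 0 = 0" "i < length xs"
  shows "dyadic (f (xs ! i))"
  using assms(3)
proof (induction i)
  case 0
  then show ?case using assms(1,2) breakpoints_nth_0 dyadic_of_nat_div[of 0 0] by simp
next
  case (Suc i)
  obtain m :: int and c where "xs ! i < xs ! Suc i" "\<And>x. x \<in> {xs ! i .. xs ! Suc i} \<Longrightarrow> f x = 2 powr m * x + c"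
    using breakpoints_piece[OF assms(1) Suc.prems] by blast
  then have "f (xs ! Suc i) = 2 powr m * (xs ! Suc i - xs ! i) + f (xs ! i)" by (auto simp: algebra_simps)
  moreover have "dyadic (xs ! Suc i - xs ! i)"
    using assms(1) Suc.prems unfolding breakpoints_def by (auto intro!: dyadic_diff)
  ultimately show ?case using Suc dyadic_affine_value by simp
qed

lemma breakpoints_dyadic_piece:
  assumes "breakpoints f xs" "f 0 = 0" "Suc i < length xs"
  obtains m :: int and b where "dyadic b" "\<And>x. x \<in> {xs ! i .. xs ! Suc i} \<Longrightarrow> f x = 2 powr m * x + b"
proof -
  obtain m :: int and c where piece: "xs ! i < xs ! Suc i" "\<And>x. x \<in> {xs ! i .. xs ! Suc i} \<Longrightarrow> f x = 2 powr m * x + c"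
    using breakpoints_piece[OF assms(1,3)] by blast
  then have "c = 2 powr m * (- xs ! i) + f (xs ! i)" by auto
  moreover have "dyadic (- xs ! i)" using assms(1,3) unfolding breakpoints_def by (auto intro: dyadic_minus)
  moreover have "dyadic (f (xs ! i))" using breakpoints_dyadic_value[OF assms(1,2)] assms(3) by simp
  ultimately have "dyadic c" using dyadic_affine_value[of "f (xs ! i)" "- xs ! i" m] by simp
  then show ?thesis using piece that by blast
qed

lemma thompsonF_inv_affine:
  assumes f: "f \<in> thompsonF" and "x0 \<in> {0..1}" "x1 \<in> {0..1}"
    and piece: "\<And>x. x \<in> {x0..x1} \<Longrightarrow> f x = 2 powr m * x + c"
    and y: "y \<in> {f x0 .. f x1}"
  shows "inv f y = 2 powr of_int (- m) * y + - (2 powr of_int (- m) * c)"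
proof -
  have "f x0 \<in> {0..1}" "f x1 \<in> {0..1}" using assms(2,3) thompsonF_image[OF f] by auto
  then have "y \<in> f ` {0..1}" using y thompsonF_image[OF f] by auto
  then obtain x where x: "x \<in> {0..1}" "y = f x" by blast
  then have "x \<in> {x0..x1}"
    using y assms(2,3) strict_mono_on_less_eq[OF thompsonF_strict_mono[OF f]] by auto
  then have "y = 2 powr m * x + c" using piece x by simp
  then have "x = 2 powr of_int (- m) * y + - (2 powr of_int (- m) * c)"
    by (simp add: powr_minus field_simps)
  then show ?thesis using inv_f_eq[OF thompsonF_inj[OF f] x(2)[symmetric]] by simp
qed

text \<open>The inverse has the breakpoints \<open>f (xs ! i)\<close>, which are dyadic.\<close>

lemma thompsonF_inv:
  assumes f: "f \<in> thompsonF"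
  shows "inv f \<in> thompsonF"
proof -
  obtain xs where xs: "breakpoints f xs" using f unfolding thompsonF_iff by blast
  note in01 = breakpoints_nth_in_01[OF xs]
  have "breakpoints (inv f) (map f xs)"
    unfolding breakpoints_def
  proof (intro conjI allI impI ballI)
    have "xs \<noteq> []" using xs unfolding breakpoints_def by auto
    then show "2 \<le> length (map f xs)" "hd (map f xs) = 0" "last (map f xs) = 1"
      using xs thompsonF_0[OF f] thompsonF_1[OF f] unfolding breakpoints_def by (simp_all add: hd_map last_map)
    show "sorted_wrt (<) (map f xs)"
      unfolding sorted_wrt_iff_nth_less
    proof (intro allI impI)
      fix i j assume "i < j" "j < length (map f xs)"
      then show "map f xs ! i < map f xs ! j"
        using xs in01 sorted_wrt_nth_less[of "(<)" xs i j]
          strict_mono_onD[OF thompsonF_strict_mono[OF f]] unfolding breakpoints_def by simp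
    qed
    show "dyadic y" if "y \<in> set (map f xs)" for y
      using that breakpoints_dyadic_value[OF xs thompsonF_0[OF f]] by (auto simp: in_set_conv_nth)
    fix i assume i: "Suc i < length (map f xs)"
    then obtain m :: int and c where "xs ! i < xs ! Suc i"
      and piece: "\<And>x. x \<in> {xs ! i .. xs ! Suc i} \<Longrightarrow> f x = 2 powr m * x + c"
      using breakpoints_piece[OF xs] by auto
    have "xs ! i \<in> {0..1}" "xs ! Suc i \<in> {0..1}" using i in01 by simp_all
    from thompsonF_inv_affine[OF f this piece] i
    show "\<exists>(m::int) c. \<forall>y\<in>{map f xs ! i .. map f xs ! Suc i}. inv f y = 2 powr m * y + c"
      by (intro exI[of _ "- m"] exI[of _ "- (2 powr of_int (- m) * c)"]) auto
  qed
  then show ?thesis using f homeo01_inv unfolding thompsonF_iff by blast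
qed

section \<open>The dyadic grid and composition\<close>

lemma finite_ex_common_bound:
  fixes P :: "'a \<Rightarrow> nat \<Rightarrow> bool"
  assumes "finite A" "\<forall>x\<in>A. \<exists>k. P x k" "\<And>x k k'. P x k \<Longrightarrow> k \<le> k' \<Longrightarrow> P x k'"
  shows "\<exists>k. \<forall>x\<in>A. P x k"
  using assms(1,2)
proof (induction A rule: finite_induct)
  case (insert a A)
  then obtain k k' where "\<forall>x\<in>A. P x k" "P a k'" by auto
  then have "\<forall>x\<in>insert a A. P x (max k k')" using assms(3) by (metis insert_iff max.cobounded1 max.cobounded2)
  then show ?case by blast
qed simp

lemma sorted_wrt_ex_segment:
  fixes xs :: "real list"
  assumes "sorted_wrt (<) xs" "xs \<noteq> []" "hd xs \<le> t" "t < last xs"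
  shows "\<exists>i. Suc i < length xs \<and> xs ! i \<le> t \<and> t < xs ! Suc i"
  using assms
proof (induction xs)
  case (Cons x ys)
  show ?case
  proof (cases "ys \<noteq> [] \<and> hd ys \<le> t")
    case True
    then obtain i where "Suc i < length ys" "ys ! i \<le> t" "t < ys ! Suc i"
      using Cons by auto
    then show ?thesis by (intro exI[of _ "Suc i"]) simp
  next
    case False
    then show ?thesis using Cons.prems by (intro exI[of _ 0]) (auto simp: hd_conv_nth split: if_splits)
  qed
qed simp

definition cell :: "nat \<Rightarrow> nat \<Rightarrow> real set" where
  "cell M j = {real j / 2 ^ M .. real (Suc j) / 2 ^ M}"

lemma left_mem_cell: "real j / 2 ^ M \<in> cell M j"
  and right_mem_cell: "real (Suc j) / 2 ^ M \<in> cell M j"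
  unfolding cell_def by (auto simp: divide_right_mono)

lemma cell_subset_01: "j < 2 ^ M \<Longrightarrow> cell M j \<subseteq> {0..1}"
  unfolding cell_def by (auto simp: field_simps simp flip: of_nat_Suc)

lemma cell_subset_coarser:
  assumes "M \<le> M'"
  shows "cell M' j \<subseteq> cell M (j div 2 ^ (M' - M))"
proof -
  define e where "e = M' - M"
  define q where "q = j div 2 ^ e"
  have M': "(2::real) ^ M' = 2 ^ M * 2 ^ e" using assms unfolding e_def by (simp flip: power_add)
  have "j = q * 2 ^ e + j mod 2 ^ e" "j mod 2 ^ e < 2 ^ e" unfolding q_def by simp_all (metis div_mult_mod_eq)
  then have "q * 2 ^ e \<le> j" "Suc j \<le> q * 2 ^ e + 2 ^ e" by linarith+
  then have "real (q * 2 ^ e) \<le> real j" "real (Suc j) \<le> real (q * 2 ^ e + 2 ^ e)"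
    by (simp_all only: of_nat_le_iff)
  then have "real q * 2 ^ e \<le> real j" "real (Suc j) \<le> real (Suc q) * 2 ^ e"
    by (simp_all add: algebra_simps)
  then have "real q * 2 ^ e / 2 ^ M' \<le> real j / 2 ^ M'"
    "real (Suc j) / 2 ^ M' \<le> real (Suc q) * 2 ^ e / 2 ^ M'"
    by (simp_all add: divide_right_mono)
  then have "real q / 2 ^ M \<le> real j / 2 ^ M'" "real (Suc j) / 2 ^ M' \<le> real (Suc q) / 2 ^ M"
    unfolding M' by simp_all
  then show ?thesis unfolding cell_def q_def[symmetric] e_def[symmetric] by auto
qed

lemma div_pow2_less: "j < 2 ^ M' \<Longrightarrow> M \<le> M' \<Longrightarrow> j div 2 ^ (M' - M) < (2::nat) ^ M"
  by (simp add: less_mult_imp_div_less flip: power_add)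

definition grid :: "nat \<Rightarrow> real list" where
  "grid M = map (\<lambda>j. real j / 2 ^ M) [0..<Suc (2 ^ M)]"

lemma length_grid: "length (grid M) = Suc (2 ^ M)"
  unfolding grid_def by simp

lemma nth_grid: "i < length (grid M) \<Longrightarrow> grid M ! i = real i / 2 ^ M"
  unfolding grid_def by (simp del: upt_Suc)

lemma grid_segment: "Suc i < length (grid M) \<Longrightarrow> {grid M ! i .. grid M ! Suc i} = cell M i"
  by (simp add: nth_grid cell_def)

lemma grid_bounds:
  "length (grid M) \<ge> 2" "hd (grid M) = 0" "last (grid M) = 1" "sorted_wrt (<) (grid M)"
proof -
  show "length (grid M) \<ge> 2" unfolding length_grid by simp
  show "hd (grid M) = 0" unfolding grid_def by (simp add: hd_map upt_rec)
  show "last (grid M) = 1" unfolding grid_def by (simp add: last_map)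
  show "sorted_wrt (<) (grid M)" unfolding grid_def sorted_wrt_map
    by (rule sorted_wrt_mono_rel[OF _ sorted_wrt_upt]) (simp add: divide_strict_right_mono)
qed

definition dyadic_affine_on :: "real set \<Rightarrow> (real \<Rightarrow> real) \<Rightarrow> bool" where
  "dyadic_affine_on I f \<longleftrightarrow> (\<exists>(m::int) b. dyadic b \<and> (\<forall>x\<in>I. f x = 2 powr m * x + b))"

definition grid_affine :: "(real \<Rightarrow> real) \<Rightarrow> nat \<Rightarrow> bool" where
  "grid_affine f M \<longleftrightarrow> (\<forall>j<2^M. dyadic_affine_on (cell M j) f)"

lemma dyadic_affine_on_subset: "dyadic_affine_on I f \<Longrightarrow> J \<subseteq> I \<Longrightarrow> dyadic_affine_on J f"
  unfolding dyadic_affine_on_def by blast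

lemma dyadic_affine_on_comp:
  assumes "dyadic_affine_on J f" "g ` I \<subseteq> J" "dyadic_affine_on I g"
  shows "dyadic_affine_on I (f \<circ> g)"
proof -
  obtain m m' :: int and b b' where
    "dyadic b" "\<forall>y\<in>J. f y = 2 powr m * y + b" "dyadic b'" "\<forall>x\<in>I. g x = 2 powr m' * x + b'"
    using assms(1,3) unfolding dyadic_affine_on_def by blast
  then have "\<forall>x\<in>I. (f \<circ> g) x = 2 powr of_int (m + m') * x + (2 powr m * b' + b)"
    using assms(2) by (auto simp: powr_add algebra_simps)
  moreover have "dyadic (2 powr m * b' + b)" using \<open>dyadic b\<close> \<open>dyadic b'\<close> by (rule dyadic_affine_value)
  ultimately show ?thesis unfolding dyadic_affine_on_def by blast
qed

lemma grid_affine_mono: "grid_affine f M \<Longrightarrow> M \<le> M' \<Longrightarrow> grid_affine f M'"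
  unfolding grid_affine_def using cell_subset_coarser div_pow2_less dyadic_affine_on_subset by metis

lemma grid_affine_breakpoints: "grid_affine f M \<Longrightarrow> breakpoints f (grid M)"
  unfolding breakpoints_def grid_affine_def dyadic_affine_on_def
  using grid_bounds grid_segment length_grid nth_grid dyadic_of_nat_div
  by (auto simp: in_set_conv_nth) (metis less_Suc_eq)

lemma grid_affine_imp_thompsonF: "homeo01 f \<Longrightarrow> grid_affine f M \<Longrightarrow> f \<in> thompsonF"
  unfolding thompsonF_iff using grid_affine_breakpoints by blast

lemma thompsonF_grid_affine:
  assumes "f \<in> thompsonF"
  shows "\<exists>M. grid_affine f M"
proof -
  obtain xs where xs: "breakpoints f xs" using assms unfolding thompsonF_iff by blast
  have "\<exists>M. \<forall>x\<in>set xs. dyadic_level M x"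
    using xs dyadic_level_mono unfolding breakpoints_def dyadic_iff_level
    by (intro finite_ex_common_bound) auto
  then obtain M where M: "\<And>i. i < length xs \<Longrightarrow> dyadic_level M (xs ! i)" using nth_mem by blast
  have "dyadic_affine_on (cell M j) f" if j: "j < 2 ^ M" for j
  proof -
    have "real j / 2 ^ M < last xs" "hd xs \<le> real j / 2 ^ M" "xs \<noteq> []" "sorted_wrt (<) xs"
      using j xs unfolding breakpoints_def by (auto simp: field_simps simp flip: of_nat_less_iff)
    then obtain i where i: "Suc i < length xs" "xs ! i \<le> real j / 2 ^ M" "real j / 2 ^ M < xs ! Suc i"
      using sorted_wrt_ex_segment by blast
    obtain a where a: "xs ! Suc i = of_int a / 2 ^ M" using M[OF i(1)] unfolding dyadic_level_def by blast
    then have "real_of_int (int j) < of_int a" using i(3) by (simp add: field_simps)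
    then have "real_of_int (int j + 1) \<le> of_int a" by (simp only: of_int_less_iff of_int_le_iff)
    then have "real (Suc j) / 2 ^ M \<le> xs ! Suc i" using a by (simp add: field_simps)
    then have "cell M j \<subseteq> {xs ! i .. xs ! Suc i}" using i(2) unfolding cell_def by auto
    moreover obtain m :: int and b where "dyadic b" "\<And>x. x \<in> {xs ! i .. xs ! Suc i} \<Longrightarrow> f x = 2 powr m * x + b"
      using breakpoints_dyadic_piece[OF xs thompsonF_0[OF assms] i(1)] by blast
    ultimately show ?thesis unfolding dyadic_affine_on_def by blast
  qed
  then show ?thesis unfolding grid_affine_def by blast
qed

definition bounded_affine_on :: "nat \<Rightarrow> real set \<Rightarrow> (real \<Rightarrow> real) \<Rightarrow> bool" where
  "bounded_affine_on k I f \<longleftrightarrow>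
     (\<exists>(m::int) b. \<bar>m\<bar> \<le> int k \<and> dyadic_level k b \<and> (\<forall>x\<in>I. f x = 2 powr m * x + b))"

lemma bounded_affine_on_mono:
  "bounded_affine_on k I f \<Longrightarrow> k \<le> k' \<Longrightarrow> J \<subseteq> I \<Longrightarrow> bounded_affine_on k' J f"
  unfolding bounded_affine_on_def using dyadic_level_mono by (meson of_nat_le_iff order_trans subsetD)

lemma dyadic_affine_on_bounded:
  assumes "dyadic_affine_on I f"
  shows "\<exists>k. bounded_affine_on k I f"
proof -
  obtain m :: int and b k where "dyadic_level k b" "\<forall>x\<in>I. f x = 2 powr m * x + b"
    using assms unfolding dyadic_affine_on_def dyadic_iff_level by blast
  moreover have "dyadic_level (k + nat \<bar>m\<bar>) b" using \<open>dyadic_level k b\<close> dyadic_level_mono by simp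
  moreover have "\<bar>m\<bar> \<le> int (k + nat \<bar>m\<bar>)" by simp
  ultimately show ?thesis unfolding bounded_affine_on_def by blast
qed

lemma thompsonF_bounded_affine:
  assumes "f \<in> thompsonF"
  obtains M0 k where "\<And>M j. M0 \<le> M \<Longrightarrow> j < 2 ^ M \<Longrightarrow> bounded_affine_on k (cell M j) f"
proof -
  obtain M0 where "grid_affine f M0" using thompsonF_grid_affine[OF assms] by blast
  then have "\<exists>k. \<forall>j\<in>{..<2 ^ M0}. bounded_affine_on k (cell M0 j) f"
    unfolding grid_affine_def using dyadic_affine_on_bounded bounded_affine_on_mono
    by (intro finite_ex_common_bound) auto
  then obtain k where k: "\<And>j. j < 2 ^ M0 \<Longrightarrow> bounded_affine_on k (cell M0 j) f" by auto
  have "bounded_affine_on k (cell M j) f" if "M0 \<le> M" "j < 2 ^ M" for M j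
    using k[OF div_pow2_less[OF that(2,1)]] bounded_affine_on_mono cell_subset_coarser[OF that(1)]
    by blast
  then show ?thesis using that by blast
qed

lemma bounded_affine_on_imp_dyadic: "bounded_affine_on k I f \<Longrightarrow> dyadic_affine_on I f"
  unfolding bounded_affine_on_def dyadic_affine_on_def dyadic_iff_level by blast

text \<open>\<open>g\<close> maps \<open>cell M j\<close> increasingly and affinely onto \<open>cell d p\<close>; for an element of F this is
  the pair of branches \<open>bin_digits M j \<rightarrow> bin_digits d p\<close>.\<close>

definition cell_map :: "(real \<Rightarrow> real) \<Rightarrow> nat \<Rightarrow> nat \<Rightarrow> nat \<Rightarrow> nat \<Rightarrow> bool" where
  "cell_map g M j d p \<longleftrightarrow> (\<forall>x\<in>cell M j. g x = (real p + (x * 2 ^ M - real j)) / 2 ^ d)"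

lemma cell_map_endpoints:
  "cell_map g M j d p \<Longrightarrow> g (real j / 2 ^ M) = real p / 2 ^ d \<and> g (real (Suc j) / 2 ^ M) = real (Suc p) / 2 ^ d"
  unfolding cell_map_def using left_mem_cell[of j M] right_mem_cell[of j M] by (simp add: add.commute)

lemma cell_map_image:
  assumes "cell_map g M j d p" "x \<in> cell M j"
  shows "g x \<in> cell d p"
proof -
  have "real j \<le> x * 2 ^ M" "x * 2 ^ M \<le> real j + 1"
    using assms(2) unfolding cell_def by (simp_all add: pos_divide_le_eq pos_le_divide_eq)
  then show ?thesis using assms unfolding cell_map_def cell_def by (simp add: divide_right_mono)
qed

lemma bounded_affine_cell_map:
  assumes g: "bounded_affine_on k (cell M j) g" and M: "L + 2*k \<le> M"
    and nonneg: "0 \<le> g (real j / 2 ^ M)" and le1: "g (real (Suc j) / 2 ^ M) \<le> 1"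
  shows "\<exists>d p. L \<le> d \<and> p < 2 ^ d \<and> cell_map g M j d p"
proof -
  obtain m :: int and \<beta> where m: "\<bar>m\<bar> \<le> int k"
    and aff: "\<And>x. x \<in> cell M j \<Longrightarrow> g x = 2 powr m * x + of_int \<beta> / 2 ^ k"
    using g unfolding bounded_affine_on_def dyadic_level_def by blast
  \<comment> \<open>with \<open>d = M - m \<ge> k\<close> the intercept is an integer multiple of \<open>1/2^d\<close>\<close>
  define d where "d = nat (int M - m)"
  have "0 \<le> int M - m" using m M by linarith
  then have d: "int d = int M - m" unfolding d_def by simp
  then have "k \<le> d" "L \<le> d" using m M by linarith+
  have "real_of_int m = real M - real d" using d by simp
  then have slope: "(2::real) powr m = 2 ^ M / 2 ^ d" by (simp add: powr_diff powr_realpow)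
  have dk: "(2::real) ^ d = 2 ^ k * 2 ^ (d - k)" using \<open>k \<le> d\<close> by (simp flip: power_add)
  define q :: int where "q = int j + \<beta> * 2 ^ (d - k)"
  have q: "g x = (of_int q + (x * 2 ^ M - real j)) / 2 ^ d" if "x \<in> cell M j" for x
  proof -
    have "of_int \<beta> / 2 ^ k = of_int \<beta> * 2 ^ (d - k) / (2::real) ^ d" unfolding dk by simp
    then have "g x = (2 ^ M * x + of_int \<beta> * 2 ^ (d - k)) / 2 ^ d"
      using aff[OF that] unfolding slope by (simp add: add_divide_distrib)
    then show ?thesis unfolding q_def by (simp add: algebra_simps)
  qed
  have "0 \<le> real_of_int q / 2 ^ d" using q[OF left_mem_cell] nonneg by simp
  then have "0 \<le> q" by (simp add: pos_le_divide_eq)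
  have "(real_of_int q + 1) / 2 ^ d \<le> 1" using q[OF right_mem_cell] le1 by simp
  then have "real_of_int (q + 1) \<le> real_of_int (2 ^ d)" by simp
  then have "nat q < 2 ^ d" using \<open>0 \<le> q\<close> by (simp only: of_int_le_iff) (simp add: nat_less_iff)
  moreover have "cell_map g M j d (nat q)" unfolding cell_map_def using q \<open>0 \<le> q\<close> by simp
  ultimately show ?thesis using \<open>L \<le> d\<close> by blast
qed

lemma thompsonF_comp:
  assumes f: "f \<in> thompsonF" and g: "g \<in> thompsonF"
  shows "f \<circ> g \<in> thompsonF"
proof -
  obtain Mg k where Mg: "\<And>M j. Mg \<le> M \<Longrightarrow> j < 2 ^ M \<Longrightarrow> bounded_affine_on k (cell M j) g"
    using thompsonF_bounded_affine[OF g] by blast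
  obtain Mf where Mf: "grid_affine f Mf" using thompsonF_grid_affine[OF f] by blast
  define M where "M = Mg + Mf + 2 * k"
  have "dyadic_affine_on (cell M j) (f \<circ> g)" if j: "j < 2 ^ M" for j
  proof -
    have gj: "bounded_affine_on k (cell M j) g" using Mg j unfolding M_def by simp
    have "g ` cell M j \<subseteq> {0..1}" using cell_subset_01[OF j] thompsonF_image[OF g] by blast
    then have "0 \<le> g (real j / 2 ^ M)" "g (real (Suc j) / 2 ^ M) \<le> 1"
      using left_mem_cell[of j M] right_mem_cell[of j M] by auto
    then obtain d p where dp: "Mf \<le> d" "p < 2 ^ d" "cell_map g M j d p"
      using bounded_affine_cell_map[OF gj, of Mf] unfolding M_def by auto
    have "dyadic_affine_on (cell d p) f" using grid_affine_mono[OF Mf dp(1)] dp(2) unfolding grid_affine_def by blast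
    moreover have "g ` cell M j \<subseteq> cell d p" using cell_map_image[OF dp(3)] by blast
    ultimately show ?thesis using dyadic_affine_on_comp bounded_affine_on_imp_dyadic[OF gj] by blast
  qed
  then have "grid_affine (f \<circ> g) M" unfolding grid_affine_def by blast
  moreover have "homeo01 (f \<circ> g)" using f g homeo01_comp unfolding thompsonF_iff by blast
  ultimately show ?thesis using grid_affine_imp_thompsonF by blast
qed

section \<open>Commutators near the endpoints\<close>

definition linear_near0 :: "(real \<Rightarrow> real) \<Rightarrow> real \<Rightarrow> real \<Rightarrow> bool" where
  "linear_near0 f a e \<longleftrightarrow> a > 0 \<and> e > 0 \<and> (\<forall>x\<in>{0..e}. f x = a * x)"

definition linear_near1 :: "(real \<Rightarrow> real) \<Rightarrow> real \<Rightarrow> real \<Rightarrow> bool" where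
  "linear_near1 f a e \<longleftrightarrow> a > 0 \<and> e > 0 \<and> (\<forall>x\<in>{1-e..1}. f x = 1 - a * (1 - x))"

lemma thompsonF_linear_near_ends:
  assumes f: "f \<in> thompsonF"
  shows "\<exists>a e. linear_near0 f a e" "\<exists>a e. linear_near1 f a e"
proof -
  obtain M where M: "grid_affine f M" using thompsonF_grid_affine[OF f] by blast
  define J where "J = 2 ^ M - (1::nat)"
  have J: "J < 2 ^ M" "real (Suc J) = 2 ^ M" unfolding J_def by simp_all
  obtain m :: int and b where first: "\<forall>x\<in>cell M 0. f x = 2 powr m * x + b"
    using M unfolding grid_affine_def dyadic_affine_on_def by fastforce
  obtain m' :: int and b' where last: "\<forall>x\<in>cell M J. f x = 2 powr m' * x + b'"
    using M J(1) unfolding grid_affine_def dyadic_affine_on_def by blast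
  have "cell M 0 = {0 .. 1 / 2 ^ M}" unfolding cell_def by simp
  moreover have "cell M J = {1 - 1 / 2 ^ M .. 1}" unfolding cell_def using J(2) by (simp add: field_simps)
  ultimately have "f 0 = b" "f 1 = 2 powr m' + b'" using first last by auto
  then have "b = 0" "b' = 1 - 2 powr m'" using thompsonF_0[OF f] thompsonF_1[OF f] by simp_all
  show "\<exists>a e. linear_near0 f a e"
    using first \<open>cell M 0 = _\<close> \<open>b = 0\<close> unfolding linear_near0_def
    by (intro exI[of _ "2 powr m"] exI[of _ "1 / 2 ^ M"]) simp
  show "\<exists>a e. linear_near1 f a e"
    using last \<open>cell M J = _\<close> \<open>b' = _\<close> unfolding linear_near1_def
    by (intro exI[of _ "2 powr m'"] exI[of _ "1 / 2 ^ M"]) (simp add: algebra_simps)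
qed

lemma linear_near0_comp:
  assumes "linear_near0 f a e" "linear_near0 g b e'"
  shows "linear_near0 (f \<circ> g) (a * b) (min e' (e / b))"
  unfolding linear_near0_def
proof (intro conjI ballI)
  show "0 < a * b" "0 < min e' (e / b)" using assms unfolding linear_near0_def by auto
  fix x assume x: "x \<in> {0..min e' (e / b)}"
  then have "g x = b * x" "b * x \<in> {0..e}" using assms unfolding linear_near0_def by (auto simp: field_simps)
  then show "(f \<circ> g) x = a * b * x" using assms unfolding linear_near0_def by simp
qed

lemma linear_near1_comp:
  assumes "linear_near1 f a e" "linear_near1 g b e'"
  shows "linear_near1 (f \<circ> g) (a * b) (min e' (e / b))"
  unfolding linear_near1_def
proof (intro conjI ballI)
  show "0 < a * b" "0 < min e' (e / b)" using assms unfolding linear_near1_def by auto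
  fix x assume x: "x \<in> {1 - min e' (e / b)..1}"
  have b: "0 < b" using assms(2) unfolding linear_near1_def by simp
  have "b * (1 - x) \<le> b * (e / b)" using x b by (intro mult_left_mono) auto
  then have "1 - b * (1 - x) \<in> {1-e..1}" using x b by auto
  moreover have "g x = 1 - b * (1 - x)" using x assms(2) unfolding linear_near1_def by auto
  ultimately show "(f \<circ> g) x = 1 - a * b * (1 - x)" using assms(1) unfolding linear_near1_def by simp
qed

lemma linear_near0_inv:
  assumes "linear_near0 f a e" "inj f"
  shows "linear_near0 (inv f) (1 / a) (a * e)"
  unfolding linear_near0_def
proof (intro conjI ballI)
  show "0 < 1 / a" "0 < a * e" using assms unfolding linear_near0_def by auto
  fix y assume "y \<in> {0..a * e}"
  then have "f (y / a) = y" using assms unfolding linear_near0_def by (auto simp: field_simps)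
  then have "inv f y = y / a" by (rule inv_f_eq[OF assms(2)])
  then show "inv f y = 1 / a * y" by simp
qed

lemma linear_near1_inv:
  assumes "linear_near1 f a e" "inj f"
  shows "linear_near1 (inv f) (1 / a) (a * e)"
  unfolding linear_near1_def
proof (intro conjI ballI)
  show "0 < 1 / a" "0 < a * e" using assms unfolding linear_near1_def by auto
  fix y assume "y \<in> {1 - a * e..1}"
  then have "1 - (1 - y) / a \<in> {1-e..1}" using assms unfolding linear_near1_def by (auto simp: field_simps)
  then have "f (1 - (1 - y) / a) = y" using assms unfolding linear_near1_def by auto
  then have "inv f y = 1 - (1 - y) / a" by (rule inv_f_eq[OF assms(2)])
  then show "inv f y = 1 - 1 / a * (1 - y)" by simp
qed

text \<open>Near each endpoint the four factors are linear with slopes \<open>a\<close>, \<open>b\<close>, \<open>1/a\<close>, \<open>1/b\<close>,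
  so the commutator has slope \<open>1\<close> there.\<close>

lemma commutator_id_near_ends:
  assumes f: "f \<in> thompsonF" and g: "g \<in> thompsonF"
  obtains e where "e > 0" "\<And>x. x \<in> {0..e} \<union> {1-e..1} \<Longrightarrow> (f \<circ> g \<circ> inv f \<circ> inv g) x = x"
proof -
  note inj = thompsonF_inj[OF f] thompsonF_inj[OF g]
  obtain a e b e' where fg0: "linear_near0 f a e" "linear_near0 g b e'"
    using thompsonF_linear_near_ends(1) f g by meson
  obtain A E where E: "linear_near0 (f \<circ> g \<circ> inv f \<circ> inv g) A E" "A = a * b * (1 / a) * (1 / b)"
    using linear_near0_comp[OF linear_near0_comp[OF linear_near0_comp[OF fg0]
       linear_near0_inv[OF fg0(1) inj(1)]] linear_near0_inv[OF fg0(2) inj(2)]] by blast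
  have "A = 1" using E(2) fg0 unfolding linear_near0_def by simp
  obtain a1 e1 b1 e1' where fg1: "linear_near1 f a1 e1" "linear_near1 g b1 e1'"
    using thompsonF_linear_near_ends(2) f g by meson
  obtain A1 E1 where E1: "linear_near1 (f \<circ> g \<circ> inv f \<circ> inv g) A1 E1" "A1 = a1 * b1 * (1 / a1) * (1 / b1)"
    using linear_near1_comp[OF linear_near1_comp[OF linear_near1_comp[OF fg1]
       linear_near1_inv[OF fg1(1) inj(1)]] linear_near1_inv[OF fg1(2) inj(2)]] by blast
  have "A1 = 1" using E1(2) fg1 unfolding linear_near1_def by simp
  show ?thesis
    using E(1) E1(1) \<open>A = 1\<close> \<open>A1 = 1\<close> unfolding linear_near0_def linear_near1_def
    by (intro that[of "min E E1"]) auto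
qed

section \<open>Branch classes of a subgroup satisfying (a)-(f)\<close>

lemma simH_refl: "subgroupF H \<Longrightarrow> simH H u u"
  unfolding subgroupF_def simH_def has_branch_def by (auto intro!: bexI[of _ id])

lemma simH_sym:
  assumes "subgroupF H" "simH H u v"
  shows "simH H v u"
proof -
  obtain h where h: "h \<in> H" "has_branch h u v" using assms(2) unfolding simH_def by blast
  then have "inv h \<in> H" "inj h" using assms(1) thompsonF_inj unfolding subgroupF_def by auto
  moreover have "has_branch (inv h) v u"
    using h(2) inv_f_eq[OF \<open>inj h\<close>] unfolding has_branch_def by metis
  ultimately show ?thesis unfolding simH_def by blast
qed

lemma simH_trans:
  assumes "subgroupF H" "simH H u v" "simH H v w"
  shows "simH H u w"
proof -
  obtain h1 h2 where "h1 \<in> H" "has_branch h1 u v" "h2 \<in> H" "has_branch h2 v w"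
    using assms(2,3) unfolding simH_def by blast
  then have "h2 \<circ> h1 \<in> H" "has_branch (h2 \<circ> h1) u w"
    using assms(1) unfolding subgroupF_def has_branch_def by auto
  then show ?thesis unfolding simH_def by blast
qed

lemma simH_append: "simH H u v \<Longrightarrow> simH H (u @ w) (v @ w)"
  unfolding simH_def using has_branch_append by blast

locale Kconds_subgroup =
  fixes K :: "(real \<Rightarrow> real) set" and n :: nat
  assumes subgroup: "subgroupF K" and conds: "Kconds n K" and n_pos: "n \<ge> 1"
begin

abbreviation sim :: "bool list \<Rightarrow> bool list \<Rightarrow> bool" where
  "sim \<equiv> simH K"

lemma sim_refl: "sim u u"
  using simH_refl[OF subgroup] .

lemma sim_sym: "sim u v \<Longrightarrow> sim v u"
  using simH_sym[OF subgroup] .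

lemma sim_trans [trans]: "sim u v \<Longrightarrow> sim v w \<Longrightarrow> sim u w"
  using simH_trans[OF subgroup] .

lemma cond_a: "k \<ge> 1 \<Longrightarrow> sim (zs_one k) (zs_one (k + n))"
  and cond_b: "k \<ge> 1 \<Longrightarrow> sim (os_zero k) (os_zero (k + n))"
  and cond_c: "1 \<le> k \<Longrightarrow> k \<le> n \<Longrightarrow> sim (zs_one k) (os_zero (n + 1 - k))"
  and cond_d: "1 \<le> k \<Longrightarrow> k \<le> n \<Longrightarrow> sim (zs_one (2*k) @ [False]) (os_zero (1 + 3*(n - k)))"
  and cond_e: "1 \<le> k \<Longrightarrow> k \<le> n \<Longrightarrow> sim (zs_one (2*k) @ [True]) (os_zero (2 + 3*(n - k)))"
  and cond_f: "1 \<le> k \<Longrightarrow> k \<le> n \<Longrightarrow> sim (zs_one (2*k - 1)) (os_zero (3*(n - k + 1)))"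
  using conds unfolding Kconds_def zs_one_def by auto

lemma zs_one_shift: "c \<ge> 1 \<Longrightarrow> sim (zs_one c) (zs_one (c + t * n))"
proof (induction t)
  case 0
  then show ?case by (simp add: sim_refl)
next
  case (Suc t)
  then have "sim (zs_one c) (zs_one (c + t * n))" by blast
  also have "sim (zs_one (c + t * n)) (zs_one (c + t * n + n))" using cond_a Suc.prems by simp
  finally show ?case by (simp add: algebra_simps)
qed

lemma os_zero_shift: "c \<ge> 1 \<Longrightarrow> sim (os_zero c) (os_zero (c + t * n))"
proof (induction t)
  case 0
  then show ?case by (simp add: sim_refl)
next
  case (Suc t)
  then have "sim (os_zero c) (os_zero (c + t * n))" by blast
  also have "sim (os_zero (c + t * n)) (os_zero (c + t * n + n))" using cond_b Suc.prems by simp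
  finally show ?case by (simp add: algebra_simps)
qed

text \<open>By (a), the class of \<open>0^a 1\<close> depends only on \<open>a mod n\<close>; we index these classes by integers,
  with \<open>1^j 0\<close> landing at \<open>1 - j\<close> by (b) and (c).\<close>

definition residue :: "int \<Rightarrow> nat" where
  "residue a = nat ((a - 1) mod int n) + 1"

definition zword :: "int \<Rightarrow> bool list" where
  "zword a = zs_one (residue a)"

lemma residue_bounds: "1 \<le> residue a" "residue a \<le> n"
proof -
  have "0 \<le> (a - 1) mod int n" "(a - 1) mod int n < int n" using n_pos by simp_all
  then show "1 \<le> residue a" "residue a \<le> n" unfolding residue_def by linarith+
qed

lemma residue_dvd: "int n dvd int (residue a) - a"
proof -
  have "int (residue a) = (a - 1) mod int n + 1" unfolding residue_def using n_pos by simp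
  then have "int (residue a) - a = int n * (- ((a - 1) div int n))"
    using div_mult_mod_eq[of "a - 1" "int n"] by (simp add: algebra_simps)
  then show ?thesis by simp
qed

lemma residue_cong: "int n dvd a - b \<Longrightarrow> residue a = residue b"
  unfolding residue_def by (metis mod_eq_dvd_iff diff_diff_eq2 diff_right_commute)

lemma residue_eq: "1 \<le> k \<Longrightarrow> k \<le> n \<Longrightarrow> int n dvd int k - a \<Longrightarrow> residue a = k"
  using residue_cong[of "int k" a] unfolding residue_def by simp

lemma zword_cong: "int n dvd a - b \<Longrightarrow> zword a = zword b"
  unfolding zword_def using residue_cong by simp

lemma eq_residue_plus: "c \<ge> 1 \<Longrightarrow> \<exists>t. c = residue (int c) + t * n"
proof -
  assume c: "c \<ge> 1"
  have "(int c - 1) mod int n \<le> int c - 1" using c by (intro zmod_le_nonneg_dividend) simp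
  then have le: "residue (int c) \<le> c" unfolding residue_def using c by linarith
  have "int n dvd int c - int (residue (int c))" using residue_dvd[of "int c"] by (simp add: dvd_diff_commute)
  then have "int n dvd int (c - residue (int c))" using le by (simp add: of_nat_diff)
  then have "n dvd c - residue (int c)" by (simp only: of_nat_dvd_iff)
  then show ?thesis using le by (metis add_diff_inverse_nat dvd_def mult.commute not_less)
qed

lemma zs_one_sim_zword: "a \<ge> 1 \<Longrightarrow> sim (zs_one a) (zword (int a))"
  using eq_residue_plus zs_one_shift[OF residue_bounds(1)] sim_sym unfolding zword_def by metis

lemma os_zero_sim_zword:
  assumes "j \<ge> 1"
  shows "sim (os_zero j) (zword (1 - int j))"
proof -
  define r where "r = residue (int j)"
  obtain t where t: "j = r + t * n" using eq_residue_plus[OF assms] unfolding r_def by blast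
  have r: "1 \<le> r" "r \<le> n" unfolding r_def using residue_bounds by auto
  have "sim (os_zero j) (os_zero r)" using os_zero_shift[OF r(1), of t] t by (simp add: sim_sym)
  also have "sim (os_zero r) (zs_one (n + 1 - r))" using cond_c[of "n + 1 - r"] r by (simp add: sim_sym)
  also have "n + 1 - r = residue (1 - int j)"
  proof (rule residue_eq[symmetric])
    show "1 \<le> n + 1 - r" "n + 1 - r \<le> n" using r by auto
    have "int (n + 1 - r) - (1 - int j) = int n * (1 + int t)" using r t by (simp add: algebra_simps)
    then show "int n dvd int (n + 1 - r) - (1 - int j)" by simp
  qed
  finally show ?thesis unfolding zword_def .
qed

lemma zword_odd: "sim (zword (2*k - 1)) (zword (3*k - 2))"
proof -
  define r where "r = residue k"
  have r: "1 \<le> r" "r \<le> n" "int n dvd int r - k" unfolding r_def using residue_bounds residue_dvd by auto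
  have "zword (2*k - 1) = zword (int (2*r - 1))"
  proof (rule zword_cong)
    have "2*k - 1 - int (2*r - 1) = 2 * (k - int r)" using r by (simp add: of_nat_diff)
    then show "int n dvd 2*k - 1 - int (2*r - 1)" using r(3) by (metis dvd_diff_commute dvd_mult)
  qed
  also have "sim (zword (int (2*r - 1))) (zs_one (2*r - 1))"
    by (rule sim_sym[OF zs_one_sim_zword]) (use r in simp)
  also have "sim (zs_one (2*r - 1)) (os_zero (3*(n - r + 1)))" using cond_f r by simp
  also have "sim (os_zero (3*(n - r + 1))) (zword (1 - int (3*(n - r + 1))))" by (rule os_zero_sim_zword) simp
  also have "zword (1 - int (3*(n - r + 1))) = zword (3*k - 2)"
  proof (rule zword_cong)
    have eq: "1 - int (3*(n - r + 1)) - (3*k - 2) = 3*(int r - k) - 3 * int n"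
      using r by (simp add: of_nat_diff)
    show "int n dvd 1 - int (3*(n - r + 1)) - (3*k - 2)"
      unfolding eq by (rule dvd_diff[OF dvd_mult[OF r(3)]]) simp
  qed
  finally show ?thesis .
qed

lemma zs_one_double_snoc:
  assumes "1 \<le> k" "k \<le> n"
  shows "sim (zs_one (2*k) @ [b]) (zword (3 * int k - (if b then 1 else 0)))"
proof (cases b)
  case True
  have "sim (zs_one (2*k) @ [True]) (os_zero (2 + 3*(n - k)))" using cond_e assms by simp
  also have "sim (os_zero (2 + 3*(n - k))) (zword (1 - int (2 + 3*(n - k))))" by (rule os_zero_sim_zword) simp
  also have "zword (1 - int (2 + 3*(n - k))) = zword (3 * int k - 1)"
    by (rule zword_cong) (use assms in \<open>simp add: of_nat_diff algebra_simps\<close>)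
  finally show ?thesis using True by simp
next
  case False
  have "sim (zs_one (2*k) @ [False]) (os_zero (1 + 3*(n - k)))" using cond_d assms by simp
  also have "sim (os_zero (1 + 3*(n - k))) (zword (1 - int (1 + 3*(n - k))))" by (rule os_zero_sim_zword) simp
  also have "zword (1 - int (1 + 3*(n - k))) = zword (3 * int k)"
    by (rule zword_cong) (use assms in \<open>simp add: of_nat_diff algebra_simps\<close>)
  finally show ?thesis using False by simp
qed

lemma zword_even:
  assumes "sim (zword (2*k)) (zword (2*k'))"
  shows "sim (zword (3*k)) (zword (3*k')) \<and> sim (zword (3*k - 1)) (zword (3*k' - 1))"
proof -
  have double: "sim (zs_one (2 * residue a)) (zword (2*a))" for a
  proof -
    have "sim (zs_one (2 * residue a)) (zword (int (2 * residue a)))"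
      by (rule zs_one_sim_zword) (use residue_bounds(1)[of a] in simp)
    also have "zword (int (2 * residue a)) = zword (2*a)"
    proof (rule zword_cong)
      have "int (2 * residue a) - 2*a = 2 * (int (residue a) - a)" by simp
      then show "int n dvd int (2 * residue a) - 2*a" using residue_dvd[of a] by (metis dvd_mult)
    qed
    finally show ?thesis .
  qed
  have snoc: "sim (zs_one (2 * residue a) @ [b]) (zword (3*a - (if b then 1 else 0)))" for a b
  proof -
    have "sim (zs_one (2 * residue a) @ [b]) (zword (3 * int (residue a) - (if b then 1 else 0)))"
      using zs_one_double_snoc[OF residue_bounds] .
    also have "zword (3 * int (residue a) - (if b then 1 else 0)) = zword (3*a - (if b then 1 else 0))"
    proof (rule zword_cong)
      have "3 * int (residue a) - (if b then 1 else 0) - (3*a - (if b then 1 else 0))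
          = 3 * (int (residue a) - a)" by simp
      then show "int n dvd 3 * int (residue a) - (if b then 1 else 0) - (3*a - (if b then 1 else 0))"
        using residue_dvd[of a] by (metis dvd_mult)
    qed
    finally show ?thesis .
  qed
  have "sim (zs_one (2 * residue k)) (zs_one (2 * residue k'))"
    using sim_trans[OF sim_trans[OF double assms] sim_sym[OF double]] .
  then have "sim (zs_one (2 * residue k) @ [b]) (zs_one (2 * residue k') @ [b])" for b
    by (rule simH_append)
  then have "sim (zword (3*k - (if b then 1 else 0))) (zword (3*k' - (if b then 1 else 0)))" for b
    using sim_trans[OF sim_trans[OF sim_sym[OF snoc]] snoc] by blast
  from this[of False] this[of True] show ?thesis by simp
qed

lemma zword_total: "sim (zword a) (zword b)"
proof -
  interpret branch_relation "\<lambda>a b. sim (zword a) (zword b)"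
    by unfold_locales (use sim_refl sim_sym sim_trans zword_odd zword_even in blast)+
  have "periodic (int n)" unfolding periodic_def using zword_cong[of "x + int n" x for x] sim_refl by simp
  then show ?thesis using R_total n_pos by blast
qed

lemma sim_zs_one: "a \<ge> 1 \<Longrightarrow> b \<ge> 1 \<Longrightarrow> sim (zs_one a) (zs_one b)"
  using sim_trans[OF sim_trans[OF zs_one_sim_zword zword_total] sim_sym[OF zs_one_sim_zword]] .

lemma sim_os_zero: "j \<ge> 1 \<Longrightarrow> sim (os_zero j) (zs_one 1)"
  using sim_trans[OF os_zero_sim_zword sim_trans[OF zword_total sim_sym[OF zs_one_sim_zword]]] by simp

lemma sim_zs_one_1_append: "sim (zs_one 1 @ w) (zs_one 1)"
proof (induction w rule: rev_induct)
  case Nil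
  then show ?case by (simp add: sim_refl)
next
  case (snoc b w)
  have "sim (zs_one 1 @ w @ [b]) (zs_one 1 @ [b])" using simH_append[OF snoc] by simp
  also have "sim (zs_one 1 @ [b]) (zs_one 2 @ [b])" by (rule simH_append[OF sim_zs_one]) simp_all
  also have "sim (zs_one 2 @ [b]) (zword (3 - (if b then 1 else 0)))"
    using zs_one_double_snoc[of 1 b] n_pos by simp
  also have "sim (zword (3 - (if b then 1 else 0))) (zs_one 1)"
    using sim_sym[OF zs_one_sim_zword] zword_total sim_trans by blast
  finally show ?case by simp
qed

lemma sim_interior_words:
  assumes "interior_word u" "interior_word v"
  shows "sim u v"
proof -
  have to_zs_one_1: "sim u (zs_one 1)" if u: "interior_word u" for u
  proof -
    obtain a b w where "a \<ge> 1" and u: "u = replicate a b @ (\<not> b) # w"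
      using interior_word_split[OF u] .
    then have "sim (replicate a b @ [\<not> b]) (zs_one 1)"
      using sim_zs_one[of a 1] sim_os_zero[of a] unfolding zs_one_def os_zero_def by (cases b) simp_all
    then have "sim u (zs_one 1 @ w)" using simH_append[of K _ _ w] u by fastforce
    also have "sim (zs_one 1 @ w) (zs_one 1)" by (rule sim_zs_one_1_append)
    finally show ?thesis .
  qed
  show ?thesis using sim_trans[OF to_zs_one_1[OF assms(1)] sim_sym[OF to_zs_one_1[OF assms(2)]]] .
qed

end

section \<open>Closed subgroups containing the commutators\<close>

lemma has_branch_cell_map:
  assumes h: "has_branch h (bin_digits M j) (bin_digits d p)" and "j < 2 ^ M" "p < 2 ^ d"
  shows "cell_map h M j d p"
  unfolding cell_map_def
proof
  fix x assume "x \<in> cell M j"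
  then have "0 \<le> x * 2 ^ M - real j" "x * 2 ^ M - real j \<le> 1"
    unfolding cell_def by (simp_all add: pos_divide_le_eq pos_le_divide_eq)
  then obtain a where a: "wval a = x * 2 ^ M - real j" using wval_surj by blast
  have "wval (wcat (bin_digits M j) a) = x"
    unfolding wval_wcat wval_list_bin_digits[OF assms(2)] a by (simp add: field_simps)
  moreover have "wval (wcat (bin_digits d p) a) = (real p + (x * 2 ^ M - real j)) / 2 ^ d"
    unfolding wval_wcat wval_list_bin_digits[OF assms(3)] a by (simp add: add_divide_distrib)
  ultimately show "h x = (real p + (x * 2 ^ M - real j)) / 2 ^ d" using h unfolding has_branch_def by metis
qed

lemma thompsonF_interior_cell_map:
  assumes c: "c \<in> thompsonF" and ck: "bounded_affine_on k (cell M j) c" "2 * k \<le> M"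
    and j: "0 < j" "j + 1 < 2 ^ M"
  shows "\<exists>d p. 0 < p \<and> p + 1 < 2 ^ d \<and> cell_map c M j d p"
proof -
  note mono = strict_mono_onD[OF thompsonF_strict_mono[OF c]]
  have "j < 2 ^ M" using j by simp
  then have in01: "real j / 2 ^ M \<in> {0..1}" "real (Suc j) / 2 ^ M \<in> {0..1}"
    using cell_subset_01 left_mem_cell right_mem_cell by blast+
  then have "0 \<le> c (real j / 2 ^ M)" "c (real (Suc j) / 2 ^ M) \<le> 1" using thompsonF_image[OF c] by auto
  then obtain d p where "p < 2 ^ d" and dp: "cell_map c M j d p"
    using bounded_affine_cell_map[OF ck(1), of 0] ck(2) by auto
  have "c 0 < c (real j / 2 ^ M)" using mono[of 0 "real j / 2 ^ M"] in01 j(1) by simp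
  then have "0 < p" using cell_map_endpoints[OF dp] thompsonF_0[OF c] by (simp add: zero_less_divide_iff)
  have "real (j + 1) < real (2 ^ M)" using j(2) by (simp only: of_nat_less_iff)
  then have "real (Suc j) < 2 ^ M" by simp
  then have "c (real (Suc j) / 2 ^ M) < c 1" using mono[of "real (Suc j) / 2 ^ M" 1] in01 by simp
  then have "real (p + 1) < real (2 ^ d)" using cell_map_endpoints[OF dp] thompsonF_1[OF c] by simp
  then have "p + 1 < 2 ^ d" by (simp only: of_nat_less_iff)
  with \<open>0 < p\<close> dp show ?thesis by blast
qed

lemma ClF_grid_cover:
  assumes "f \<in> thompsonF" "\<And>j. j < 2 ^ M \<Longrightarrow> \<exists>h\<in>H. \<forall>x\<in>cell M j. f x = h x"
  shows "f \<in> ClF H"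
  unfolding ClF_def using assms grid_bounds grid_segment length_grid
  by (intro CollectI conjI exI[of _ "grid M"]) auto

lemma cell_subset_ends:
  assumes "1 / 2 ^ M \<le> e" "j = 0 \<or> j + 1 = 2 ^ M"
  shows "cell M j \<subseteq> {0..e} \<union> {1-e..1}"
proof (cases "j = 0")
  case True
  then have "cell M j = {0 .. 1 / 2 ^ M}" unfolding cell_def by simp
  then show ?thesis using assms(1) by auto
next
  case False
  then have "j + 1 = 2 ^ M" using assms(2) by simp
  then have "real (j + 1) = real (2 ^ M)" by (rule arg_cong)
  then have "cell M j = {1 - 1 / 2 ^ M .. 1}" unfolding cell_def by (simp add: field_simps)
  then show ?thesis using assms(1) by auto
qed

context Kconds_subgroup
begin

lemma mem_if_id_near_ends:
  assumes closed: "closedF K" and c: "c \<in> thompsonF" and "e > 0"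
    and ends: "\<And>x. x \<in> {0..e} \<union> {1-e..1} \<Longrightarrow> c x = x"
  shows "c \<in> K"
proof -
  obtain M0 k where Mk: "\<And>M j. M0 \<le> M \<Longrightarrow> j < 2 ^ M \<Longrightarrow> bounded_affine_on k (cell M j) c"
    using thompsonF_bounded_affine[OF c] by blast
  obtain E where E: "(1/2) ^ E < e" using real_arch_pow_inv[OF \<open>e > 0\<close>, of "1/2"] by auto
  define M where "M = M0 + 2 * k + E"
  have "(1/2::real) ^ M \<le> (1/2) ^ E" unfolding M_def by (rule power_decreasing) simp_all
  then have Me: "1 / 2 ^ M \<le> e" using E by (simp add: power_divide)
  have "\<exists>h\<in>K. \<forall>x\<in>cell M j. c x = h x" if j: "j < 2 ^ M" for j
  proof (cases "j = 0 \<or> j + 1 = 2 ^ M")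
    case True
    have "c x = id x" if "x \<in> cell M j" for x
      using ends cell_subset_ends[OF Me True] that by auto
    moreover have "id \<in> K" using subgroup unfolding subgroupF_def by blast
    ultimately show ?thesis by blast
  next
    case False
    then have "0 < j" "j + 1 < 2 ^ M" using j by auto
    moreover have "bounded_affine_on k (cell M j) c" "2 * k \<le> M" using Mk j unfolding M_def by auto
    ultimately obtain d p where dp: "0 < p" "p + 1 < 2 ^ d" "cell_map c M j d p"
      using thompsonF_interior_cell_map[OF c] by blast
    have "interior_word (bin_digits M j)" "interior_word (bin_digits d p)"
      using \<open>0 < j\<close> \<open>j + 1 < 2 ^ M\<close> dp(1,2) by (simp_all add: interior_word_bin_digits)
    then obtain h where h: "h \<in> K" "has_branch h (bin_digits M j) (bin_digits d p)"
      using sim_interior_words unfolding simH_def by blast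
    have "cell_map h M j d p" using has_branch_cell_map[OF h(2) j] dp(2) by simp
    then have "\<forall>x\<in>cell M j. c x = h x" using dp(3) unfolding cell_map_def by simp
    with h(1) show ?thesis by blast
  qed
  then have "c \<in> ClF K" by (rule ClF_grid_cover[OF c])
  then show ?thesis using closed unfolding closedF_def by simp
qed

end

theorem proposition3p6:
  fixes n :: nat
  assumes "n \<ge> 1"
  shows "derivedF \<subseteq> Knn n"
  unfolding Knn_def
proof (rule Inter_greatest)
  fix K assume "K \<in> {K. subgroupF K \<and> closedF K \<and> Kconds n K}"
  then have K: "subgroupF K" "closedF K" "Kconds n K" by auto
  interpret Kconds_subgroup K n using K(1,3) assms by unfold_locales
  have "f \<circ> g \<circ> inv f \<circ> inv g \<in> K" if fg: "f \<in> thompsonF" "g \<in> thompsonF" for f g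
  proof -
    obtain e where "e > 0" "\<And>x. x \<in> {0..e} \<union> {1-e..1} \<Longrightarrow> (f \<circ> g \<circ> inv f \<circ> inv g) x = x"
      using commutator_id_near_ends[OF fg] by blast
    moreover have "f \<circ> g \<circ> inv f \<circ> inv g \<in> thompsonF"
      using fg by (intro thompsonF_comp thompsonF_inv)
    ultimately show ?thesis using mem_if_id_near_ends[OF K(2)] by blast
  qed
  then show "derivedF \<subseteq> K" unfolding derivedF_def using K(1) by (intro Inter_lower) blast
qed

end
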